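(* Fix $n \ge 2$. If $x_1, x_2, \dots, x_n$ is a sequence of positive real numbers with mean $\mu = \frac1n\sum_{i=1}^n x_i$ and variance $\sigma^2 = \frac1n\sum_{i=1}^n (x_i-\mu)^2$ (with $\sigma\ge 0$), then $$\mu - (x_1 x_2 \cdots x_n)^{1/n} \le \sqrt{n-1}\,\sigma.$$ *)

theory Defs
  imports Complex_Main
begin

end

theory Submission
  imports Defs "HOL-Analysis.Convex"
begin

text \<open>The geometric mean is at least the smallest entry \<open>x\<^sub>k\<close>. On the other hand the deviations
  \<open>d\<^sub>i = x\<^sub>i - \<mu>\<close> sum to zero, so by Cauchy--Schwarz on the remaining \<open>n - 1\<close> entries
  \<open>d\<^sub>k\<^sup>2 = (\<Sum>\<^sub>i\<^sub>\<noteq>\<^sub>k d\<^sub>i)\<^sup>2 \<le> (n - 1) \<Sum>\<^sub>i\<^sub>\<noteq>\<^sub>k d\<^sub>i\<^sup>2\<close>, which rearranges to Samuelson's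
  inequality \<open>d\<^sub>k\<^sup>2 \<le> (n - 1) \<sigma>\<^sup>2\<close>. Hence \<open>\<mu> - root n (\<Prod> x) \<le> \<mu> - x\<^sub>k \<le> \<surd>(n - 1) \<sigma>\<close>.\<close>

lemma le_root_prod:
  fixes f :: "'a \<Rightarrow> real"
  assumes "finite A" "A \<noteq> {}" "0 \<le> a" "\<And>i. i \<in> A \<Longrightarrow> a \<le> f i"
  shows "a \<le> root (card A) (prod f A)"
proof -
  have card_pos: "card A > 0" using assms(1,2) by (simp add: card_gt_0_iff)
  have "a ^ card A = (\<Prod>i\<in>A. a)" by simp
  also have "\<dots> \<le> prod f A"
    by (rule prod_mono) (use assms(3,4) in auto)
  finally have "root (card A) (a ^ card A) \<le> root (card A) (prod f A)"
    using card_pos by simp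
  thus ?thesis using card_pos assms(3) by (simp add: real_root_power_cancel)
qed

lemma samuelson_deviation_bound:
  fixes d :: "'a \<Rightarrow> real"
  assumes "finite A" "k \<in> A" "sum d A = 0"
  shows "real (card A) * (d k)\<^sup>2 \<le> (real (card A) - 1) * (\<Sum>j\<in>A. (d j)\<^sup>2)"
proof -
  let ?B = "A - {k}"
  have "card A \<ge> 1"
    using assms(1,2) card_0_eq by fastforce
  then have card_B: "real (card ?B) = real (card A) - 1"
    using assms(2) by (simp add: of_nat_diff)
  have split: "\<And>g. sum g A = g k + sum g ?B"
    using assms(1,2) by (simp add: sum.remove)
  have "sum d ?B = - d k"
    using assms(3) split[of d] by simp
  then have "(d k)\<^sup>2 = (sum d ?B)\<^sup>2"
    by simp
  also have "\<dots> \<le> (real (card A) - 1) * (\<Sum>j\<in>?B. (d j)\<^sup>2)"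
    using sum_squared_le_sum_of_squares[of d ?B] card_B by (simp add: mult.commute)
  finally show ?thesis
    using split[of "\<lambda>j. (d j)\<^sup>2"] by (simp add: algebra_simps)
qed

theorem corollary1:
  fixes n :: nat and x :: "nat \<Rightarrow> real" and \<mu> \<sigma> :: real
  assumes "n \<ge> 2"
    and "\<And>i. i \<in> {1..n} \<Longrightarrow> x i > 0"
    and "\<mu> = (\<Sum>i=1..n. x i) / real n"
    and "\<sigma> \<ge> 0"
    and "\<sigma>^2 = (\<Sum>i=1..n. (x i - \<mu>)^2) / real n"
  shows "\<mu> - root n (\<Prod>i=1..n. x i) \<le> sqrt (real n - 1) * \<sigma>"
proof -
  obtain k where k: "k \<in> {1..n}" and k_min: "\<And>i. i \<in> {1..n} \<Longrightarrow> x k \<le> x i"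
    using arg_min_if_finite[of "{1..n}" x] assms(1) by (fastforce simp: not_less)
  have n_pos: "real n > 0" using assms(1) by simp
  have min_le_geometric_mean: "x k \<le> root n (\<Prod>i=1..n. x i)"
    using le_root_prod[of "{1..n}" "x k" x] k k_min assms(2) by fastforce
  have "real n * (x k - \<mu>)\<^sup>2 \<le> (real n - 1) * (real n * \<sigma>\<^sup>2)"
    using samuelson_deviation_bound[of "{1..n}" k "\<lambda>i. x i - \<mu>"] k n_pos assms(3,5)
    by (simp add: sum_subtractf)
  then have "(x k - \<mu>)\<^sup>2 \<le> (real n - 1) * \<sigma>\<^sup>2"
    using n_pos by (simp only: mult.left_commute[of "real n - 1"] mult_le_cancel_left_pos)
  then have "(\<mu> - x k)\<^sup>2 \<le> (sqrt (real n - 1) * \<sigma>)\<^sup>2"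
    using assms(1) by (simp add: power_mult_distrib power2_commute)
  moreover have "0 \<le> sqrt (real n - 1) * \<sigma>"
    using assms(1,4) by simp
  ultimately have "\<mu> - x k \<le> sqrt (real n - 1) * \<sigma>"
    by (rule power2_le_imp_le)
  with min_le_geometric_mean show ?thesis by linarith
qed

end
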